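(* Let $\Omega\subset\mathbb{C}^n$ be a bounded connected domain and let $B(\Omega)$ be a Banach space of holomorphic functions on $\Omega$ containing all polynomials on $\Omega$, such that for every $z\in\Omega$ the evaluation functional $K_z(f)=f(z)$ is bounded on $B(\Omega)$. Let $\psi\in B(\Omega)$ and let $\varphi=(\varphi_1,\dots,\varphi_n):\Omega\to\Omega$ be a holomorphic self-map such that both the multiplication operator $M_\psi f=\psi f$ and the composition operator $C_\varphi f=f\circ\varphi$ are bounded on $B(\Omega)$. If $M_\psi C_\varphi$ is a Fredholm operator on $B(\Omega)$, then: (i) if $n=1$, $\psi$ has at most finitely many zeros in $\Omega$; (ii) if $n>1$, $\psi$ has no zeros in $\Omega$; (iii) $\varphi$ is univalent (injective) on $\Omega$.
   Context: A Banach space of holomorphic functions on $\Omega$ is a vector space of holomorphic functions on $\Omega$ (pointwise operations) with a complete norm. A bounded operator $T$ is Fredholm if it has closed range, $\dim\ker T<\infty$ and $\dim\ker T^*<\infty$. *)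

theory Defs
  imports "HOL-Analysis.Analysis"
begin

definition hol_on :: "(complex^'n) set \<Rightarrow> (complex^'n \<Rightarrow> complex) \<Rightarrow> bool" where
  "hol_on \<Omega> f \<longleftrightarrow>
     (\<forall>z\<in>\<Omega>. \<exists>L. (f has_derivative L) (at z) \<and> (\<forall>c v. L (c *s v) = c * L v))"

definition hol_self_map :: "(complex^'n) set \<Rightarrow> (complex^'n \<Rightarrow> complex^'n) \<Rightarrow> bool" where
  "hol_self_map \<Omega> \<phi> \<longleftrightarrow> (\<forall>i. hol_on \<Omega> (\<lambda>z. \<phi> z $ i)) \<and> \<phi> ` \<Omega> \<subseteq> \<Omega>"

text \<open>Functions on Omega are represented as functions on the whole space that vanish
  outside Omega.\<close>
definition hol_banach_space ::
  "(complex^'n) set \<Rightarrow> (complex^'n \<Rightarrow> complex) set \<Rightarrow> ((complex^'n \<Rightarrow> complex) \<Rightarrow> real) \<Rightarrow> bool" where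
  "hol_banach_space \<Omega> B N \<longleftrightarrow>
     (\<forall>f\<in>B. hol_on \<Omega> f \<and> (\<forall>z. z \<notin> \<Omega> \<longrightarrow> f z = 0)) \<and>
     (\<lambda>z. 0) \<in> B \<and>
     (\<forall>f\<in>B. \<forall>g\<in>B. (\<lambda>z. f z + g z) \<in> B) \<and>
     (\<forall>c. \<forall>f\<in>B. (\<lambda>z. c * f z) \<in> B) \<and>
     (\<forall>f\<in>B. 0 \<le> N f) \<and>
     (\<forall>f\<in>B. N f = 0 \<longleftrightarrow> f = (\<lambda>z. 0)) \<and>
     (\<forall>c. \<forall>f\<in>B. N (\<lambda>z. c * f z) = cmod c * N f) \<and>
     (\<forall>f\<in>B. \<forall>g\<in>B. N (\<lambda>z. f z + g z) \<le> N f + N g) \<and>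
     (\<forall>u. (\<forall>k. u k \<in> B) \<and>
          (\<forall>e>0. \<exists>K. \<forall>m\<ge>K. \<forall>k\<ge>K. N (\<lambda>z. u m z - u k z) < e) \<longrightarrow>
          (\<exists>g\<in>B. (\<lambda>k. N (\<lambda>z. u k z - g z)) \<longlonglongrightarrow> 0))"

text \<open>B contains all polynomials (restricted to Omega): it contains every monomial,
  hence, being a vector space, every polynomial.\<close>
definition contains_polynomials ::
  "(complex^'n) set \<Rightarrow> (complex^'n \<Rightarrow> complex) set \<Rightarrow> bool" where
  "contains_polynomials \<Omega> B \<longleftrightarrow>
     (\<forall>\<alpha> :: 'n \<Rightarrow> nat. (\<lambda>z. if z \<in> \<Omega> then (\<Prod>i\<in>UNIV. (z $ i) ^ \<alpha> i) else 0) \<in> B)"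

definition bounded_point_evaluations ::
  "(complex^'n) set \<Rightarrow> (complex^'n \<Rightarrow> complex) set \<Rightarrow> ((complex^'n \<Rightarrow> complex) \<Rightarrow> real) \<Rightarrow> bool" where
  "bounded_point_evaluations \<Omega> B N \<longleftrightarrow>
     (\<forall>z\<in>\<Omega>. \<exists>C. \<forall>f\<in>B. cmod (f z) \<le> C * N f)"

definition bounded_op ::
  "(complex^'n \<Rightarrow> complex) set \<Rightarrow> ((complex^'n \<Rightarrow> complex) \<Rightarrow> real)
    \<Rightarrow> ((complex^'n \<Rightarrow> complex) \<Rightarrow> (complex^'n \<Rightarrow> complex)) \<Rightarrow> bool" where
  "bounded_op B N T \<longleftrightarrow>
     (\<forall>f\<in>B. T f \<in> B) \<and>
     (\<forall>f\<in>B. \<forall>g\<in>B. T (\<lambda>z. f z + g z) = (\<lambda>z. T f z + T g z)) \<and>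
     (\<forall>c. \<forall>f\<in>B. T (\<lambda>z. c * f z) = (\<lambda>z. c * T f z)) \<and>
     (\<exists>C. \<forall>f\<in>B. N (T f) \<le> C * N f)"

definition mult_op :: "(complex^'n) set \<Rightarrow> (complex^'n \<Rightarrow> complex)
    \<Rightarrow> (complex^'n \<Rightarrow> complex) \<Rightarrow> (complex^'n \<Rightarrow> complex)" where
  "mult_op \<Omega> \<psi> f = (\<lambda>z. if z \<in> \<Omega> then \<psi> z * f z else 0)"

definition comp_op :: "(complex^'n) set \<Rightarrow> (complex^'n \<Rightarrow> complex^'n)
    \<Rightarrow> (complex^'n \<Rightarrow> complex) \<Rightarrow> (complex^'n \<Rightarrow> complex)" where
  "comp_op \<Omega> \<phi> f = (\<lambda>z. if z \<in> \<Omega> then f (\<phi> z) else 0)"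

definition bounded_functional ::
  "(complex^'n \<Rightarrow> complex) set \<Rightarrow> ((complex^'n \<Rightarrow> complex) \<Rightarrow> real)
    \<Rightarrow> ((complex^'n \<Rightarrow> complex) \<Rightarrow> complex) \<Rightarrow> bool" where
  "bounded_functional B N \<Lambda> \<longleftrightarrow>
     (\<forall>f\<in>B. \<forall>g\<in>B. \<Lambda> (\<lambda>z. f z + g z) = \<Lambda> f + \<Lambda> g) \<and>
     (\<forall>c. \<forall>f\<in>B. \<Lambda> (\<lambda>z. c * f z) = c * \<Lambda> f) \<and>
     (\<exists>C. \<forall>f\<in>B. cmod (\<Lambda> f) \<le> C * N f)"

text \<open>Fredholm: closed range, finite-dimensional kernel, and finite-dimensional kernel of
  the Banach adjoint T* (the functionals Lambda in the dual with Lambda o T = 0);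
  functionals are identified when they agree on B.\<close>
definition fredholm ::
  "(complex^'n \<Rightarrow> complex) set \<Rightarrow> ((complex^'n \<Rightarrow> complex) \<Rightarrow> real)
    \<Rightarrow> ((complex^'n \<Rightarrow> complex) \<Rightarrow> (complex^'n \<Rightarrow> complex)) \<Rightarrow> bool" where
  "fredholm B N T \<longleftrightarrow>
     bounded_op B N T \<and>
     (\<forall>u g. (\<forall>k. u k \<in> T ` B) \<and> g \<in> B \<and> (\<lambda>k. N (\<lambda>z. u k z - g z)) \<longlonglongrightarrow> 0
            \<longrightarrow> g \<in> T ` B) \<and>
     (\<exists>F. finite F \<and> F \<subseteq> {f\<in>B. T f = (\<lambda>z. 0)} \<and>
        (\<forall>g\<in>B. T g = (\<lambda>z. 0) \<longrightarrow> (\<exists>c. g = (\<lambda>z. \<Sum>h\<in>F. c h * h z)))) \<and>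
     (\<exists>F. finite F \<and>
        (\<forall>\<mu>\<in>F. bounded_functional B N \<mu> \<and> (\<forall>f\<in>B. \<mu> (T f) = 0)) \<and>
        (\<forall>\<Lambda>. bounded_functional B N \<Lambda> \<and> (\<forall>f\<in>B. \<Lambda> (T f) = 0) \<longrightarrow>
           (\<exists>c. \<forall>f\<in>B. \<Lambda> f = (\<Sum>\<mu>\<in>F. c \<mu> * \<mu> f))))"

end

theory Submission
  imports Defs "HOL-Complex_Analysis.Complex_Analysis"
begin

text \<open>The kernel of the adjoint of T = M\<psi> C\<phi> is finite dimensional. A zero x of \<psi> gives the
  annihilator f \<mapsto> f(x) of the range of T, and two points x \<noteq> y with \<phi> x = \<phi> y and
  \<psi> y \<noteq> 0 give f \<mapsto> \<psi>(y) f(x) - \<psi>(x) f(y). Polynomials separate points, so infinitely many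
  such functionals would be linearly independent. Hence \<psi> has finitely many zeros and only
  finitely many points of \<Omega> share their image under \<phi> with another point.

  For n > 1 a zero of a holomorphic function is never isolated (restrict to a complex
  two-plane and use the minimum modulus principle on the slices), so \<psi> has no zeros. Finally,
  if \<phi> a = \<phi> b with a \<noteq> b, then \<phi> is injective on small balls around a and b, whose images
  are open by invariance of domain; their intersection is a nonempty open, hence infinite, set
  of values taken twice.\<close>

lemma homogeneous_system_nontrivial_solution:
  fixes a :: "'r \<Rightarrow> 'c \<Rightarrow> 'a::field"
  assumes "finite F" "finite S" "card F < card S"
  shows "\<exists>c. (\<exists>k\<in>S. c k \<noteq> 0) \<and> (\<forall>\<mu>\<in>F. (\<Sum>k\<in>S. a \<mu> k * c k) = 0)"
  using assms
proof (induction F arbitrary: S a rule: finite_induct)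
  case empty
  then obtain k where "k \<in> S" by fastforce
  then show ?case by (intro exI[of _ "\<lambda>_. 1"]) auto
next
  case (insert \<mu> F)
  show ?case
  proof (cases "\<forall>k\<in>S. a \<mu> k = 0")
    case True
    from insert.IH[of S a] insert.prems insert.hyps obtain c
      where "\<exists>k\<in>S. c k \<noteq> 0" "\<forall>\<nu>\<in>F. (\<Sum>k\<in>S. a \<nu> k * c k) = 0"
      by auto
    with True show ?thesis by (intro exI[of _ c]) auto
  next
    case False
    then obtain k0 where k0: "k0 \<in> S" "a \<mu> k0 \<noteq> 0" by auto
    define S' where "S' = S - {k0}"
    \<comment> \<open>Gaussian elimination of the unknown c k0 by means of the equation \<mu>\<close>
    define b where "b = (\<lambda>\<nu> k. a \<nu> k - a \<nu> k0 * a \<mu> k / a \<mu> k0)"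
    have "finite S'" "card F < card S'"
      using insert k0 by (auto simp: S'_def card_Diff_singleton)
    with insert.IH obtain c' where c': "\<exists>k\<in>S'. c' k \<noteq> 0" "\<forall>\<nu>\<in>F. (\<Sum>k\<in>S'. b \<nu> k * c' k) = 0"
      by blast
    define c where "c = c'(k0 := - (\<Sum>k\<in>S'. a \<mu> k * c' k) / a \<mu> k0)"
    have split: "(\<Sum>k\<in>S. a \<nu> k * c k) = a \<nu> k0 * c k0 + (\<Sum>k\<in>S'. a \<nu> k * c' k)" for \<nu>
      using k0 insert.prems by (simp add: S'_def c_def sum.remove)
    have "(\<Sum>k\<in>S. a \<nu> k * c k) = 0" if "\<nu> \<in> insert \<mu> F" for \<nu>
    proof (cases "\<nu> = \<mu>")
      case False
      with that c'(2) have "(\<Sum>k\<in>S'. b \<nu> k * c' k) = 0" by auto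
      then have "(\<Sum>k\<in>S'. a \<nu> k * c' k) = a \<nu> k0 / a \<mu> k0 * (\<Sum>k\<in>S'. a \<mu> k * c' k)"
        by (simp add: b_def algebra_simps sum_subtractf sum_distrib_left)
      with k0 show ?thesis unfolding split by (simp add: c_def field_simps)
    qed (use k0 in \<open>unfold split, simp add: c_def\<close>)
    moreover have "\<exists>k\<in>S. c k \<noteq> 0" using c'(1) by (auto simp: c_def S'_def)
    ultimately show ?thesis by blast
  qed
qed

lemma hol_banach_spaceD:
  assumes "hol_banach_space \<Omega> B N"
  shows "(\<lambda>z. 0) \<in> B"
    and "f \<in> B \<Longrightarrow> g \<in> B \<Longrightarrow> (\<lambda>z. f z + g z) \<in> B"
    and "f \<in> B \<Longrightarrow> (\<lambda>z. c * f z) \<in> B"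
    and "f \<in> B \<Longrightarrow> hol_on \<Omega> f"
  using assms unfolding hol_banach_space_def by blast+

lemma hol_banach_space_sum:
  assumes "hol_banach_space \<Omega> B N" "finite S" "q ` S \<subseteq> B"
  shows "(\<lambda>z. \<Sum>k\<in>S. c k * q k z) \<in> B"
  using assms(2,3)
  by (induction S rule: finite_induct) (auto intro: hol_banach_spaceD[OF assms(1)])

lemma bounded_functionalD:
  assumes "bounded_functional B N \<Lambda>"
  shows "f \<in> B \<Longrightarrow> g \<in> B \<Longrightarrow> \<Lambda> (\<lambda>z. f z + g z) = \<Lambda> f + \<Lambda> g"
    and "f \<in> B \<Longrightarrow> \<Lambda> (\<lambda>z. c * f z) = c * \<Lambda> f"
  using assms unfolding bounded_functional_def by blast+

lemma bounded_functional_sum: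
  assumes "hol_banach_space \<Omega> B N" "bounded_functional B N \<Lambda>" "finite S" "q ` S \<subseteq> B"
  shows "\<Lambda> (\<lambda>z. \<Sum>k\<in>S. c k * q k z) = (\<Sum>k\<in>S. c k * \<Lambda> (q k))"
  using assms(3,4)
proof (induction S rule: finite_induct)
  case empty
  show ?case
    using bounded_functionalD(2)[OF assms(2) hol_banach_spaceD(1)[OF assms(1)], of 0] by simp
next
  case (insert k S)
  then have "q k \<in> B" "(\<lambda>z. c k * q k z) \<in> B" "(\<lambda>z. \<Sum>k\<in>S. c k * q k z) \<in> B"
    using hol_banach_spaceD(3)[OF assms(1)] hol_banach_space_sum[OF assms(1)] by auto
  with insert show ?case by (simp add: bounded_functionalD[OF assms(2)])
qed

lemma prod_power_fun_upd_Suc: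
  fixes z :: "'a::comm_semiring_1^'n"
  shows "(\<Prod>j\<in>UNIV. (z $ j) ^ (\<alpha>(i := Suc (\<alpha> i))) j) = z $ i * (\<Prod>j\<in>UNIV. (z $ j) ^ \<alpha> j)"
proof -
  have "(\<Prod>j\<in>UNIV. (z $ j) ^ (\<alpha>(i := Suc (\<alpha> i))) j)
      = (\<Prod>j\<in>UNIV. (if j = i then z $ j else 1) * (z $ j) ^ \<alpha> j)"
    by (rule prod.cong) auto
  then show ?thesis by (simp add: prod.distrib)
qed

lemma contains_polynomials_prod_affine:
  fixes \<Omega> :: "(complex^'n) set" and i :: "'k \<Rightarrow> 'n" and a :: "'k \<Rightarrow> complex"
  assumes hbs: "hol_banach_space \<Omega> B N" and "contains_polynomials \<Omega> B" "finite S"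
  shows "(\<lambda>z. if z \<in> \<Omega> then (\<Prod>k\<in>S. z $ i k - a k) * (\<Prod>j\<in>UNIV. (z $ j) ^ \<alpha> j) else 0) \<in> B"
  using assms(3)
proof (induction S arbitrary: \<alpha> rule: finite_induct)
  case empty
  have "(\<lambda>z. if z \<in> \<Omega> then \<Prod>j\<in>UNIV. (z $ j) ^ \<alpha> j else 0) \<in> B"
    using assms(2) unfolding contains_polynomials_def by blast
  then show ?case by (simp only: prod.empty mult_1)
next
  case (insert k S)
  define p where "p \<alpha> z = (if z \<in> \<Omega> then (\<Prod>k\<in>S. z $ i k - a k) * (\<Prod>j\<in>UNIV. (z $ j) ^ \<alpha> j) else 0)"
    for \<alpha> z
  have p_in: "p \<beta> \<in> B" for \<beta> using insert.IH unfolding p_def .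
  have "(\<lambda>z. if z \<in> \<Omega> then (\<Prod>k\<in>insert k S. z $ i k - a k) * (\<Prod>j\<in>UNIV. (z $ j) ^ \<alpha> j) else 0)
      = (\<lambda>z. p (\<alpha>(i k := Suc (\<alpha> (i k)))) z + - a k * p \<alpha> z)"
    using insert.hyps
    by (auto simp: fun_eq_iff p_def prod_power_fun_upd_Suc algebra_simps simp del: fun_upd_apply)
  then show ?case
    by (simp only:) (intro hol_banach_spaceD(2,3)[OF hbs] p_in)
qed

lemma polynomial_interpolant:
  fixes \<Omega> :: "(complex^'n) set"
  assumes hbs: "hol_banach_space \<Omega> B N" and "contains_polynomials \<Omega> B" "finite S"
    and "x \<in> \<Omega>" "x \<notin> S"
  obtains q where "q \<in> B" "q x = 1" "\<forall>p\<in>S. q p = 0"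
proof -
  have "\<forall>p\<in>S. \<exists>j. x $ j \<noteq> p $ j" using assms(5) by (metis vec_eq_iff)
  then obtain i where i: "\<forall>p\<in>S. x $ i p \<noteq> p $ i p" by metis
  define P where "P z = (\<Prod>p\<in>S. z $ i p - p $ i p)" for z :: "complex^'n"
  have "(\<lambda>z. if z \<in> \<Omega> then P z * (\<Prod>j\<in>UNIV. (z $ j) ^ 0) else 0) \<in> B"
    unfolding P_def by (rule contains_polynomials_prod_affine[OF assms(1-3)])
  then have "(\<lambda>z. if z \<in> \<Omega> then P z else 0) \<in> B"
    by (simp only: power_0 prod.neutral_const mult_1_right)
  then have "(\<lambda>z. inverse (P x) * (if z \<in> \<Omega> then P z else 0)) \<in> B"
    by (rule hol_banach_spaceD(3)[OF hbs])
  moreover have "P x \<noteq> 0" using i \<open>finite S\<close> by (simp add: P_def)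
  moreover have "P p = 0" if "p \<in> S" for p using that \<open>finite S\<close> by (auto simp: P_def)
  ultimately show thesis
    using \<open>x \<in> \<Omega>\<close> by (intro that[of "\<lambda>z. inverse (P x) * (if z \<in> \<Omega> then P z else 0)"]) auto
qed

lemma polynomial_lagrange_basis:
  fixes \<Omega> :: "(complex^'n) set"
  assumes hbs: "hol_banach_space \<Omega> B N" and cp: "contains_polynomials \<Omega> B"
    and "finite A" "A \<subseteq> \<Omega>" "finite E" "A \<inter> E = {}"
  obtains q where "\<And>x. x \<in> A \<Longrightarrow> q x \<in> B" "\<And>x. x \<in> A \<Longrightarrow> q x x = 1"
    and "\<And>x p. x \<in> A \<Longrightarrow> p \<in> A \<union> E \<Longrightarrow> p \<noteq> x \<Longrightarrow> q x p = 0"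
proof -
  have "\<exists>q. q \<in> B \<and> q x = 1 \<and> (\<forall>p\<in>(A \<union> E) - {x}. q p = 0)" if "x \<in> A" for x
    by (rule polynomial_interpolant[OF hbs cp, of "(A \<union> E) - {x}" x]) (use that assms in auto)
  then have "\<forall>x\<in>A. \<exists>q. q \<in> B \<and> q x = 1 \<and> (\<forall>p\<in>(A \<union> E) - {x}. q p = 0)" by blast
  from bchoice[OF this] obtain q
    where "\<forall>x\<in>A. q x \<in> B \<and> q x x = 1 \<and> (\<forall>p\<in>(A \<union> E) - {x}. q x p = 0)"
    by blast
  then show thesis by (intro that[of q]) auto
qed

lemma bounded_functional_two_point_eval:
  assumes "bounded_point_evaluations \<Omega> B N" "x \<in> \<Omega>" "y \<in> \<Omega>"
  shows "bounded_functional B N (\<lambda>f. a * f x - b * f y)"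
proof -
  obtain Cx Cy where Cx: "\<forall>f\<in>B. cmod (f x) \<le> Cx * N f" and Cy: "\<forall>f\<in>B. cmod (f y) \<le> Cy * N f"
    using assms unfolding bounded_point_evaluations_def by meson
  have "cmod (a * f x - b * f y) \<le> (cmod a * Cx + cmod b * Cy) * N f" if "f \<in> B" for f
  proof -
    have "cmod (a * f x - b * f y) \<le> cmod a * cmod (f x) + cmod b * cmod (f y)"
      by (metis norm_mult norm_triangle_ineq4)
    also have "\<dots> \<le> cmod a * (Cx * N f) + cmod b * (Cy * N f)"
      using Cx Cy that by (intro add_mono mult_left_mono) auto
    finally show ?thesis by (simp add: algebra_simps)
  qed
  then have "\<exists>C. \<forall>f\<in>B. cmod (a * f x - b * f y) \<le> C * N f" by blast
  then show ?thesis unfolding bounded_functional_def by (auto simp: algebra_simps)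
qed

definition adjoint_kernel ::
  "(complex^'n \<Rightarrow> complex) set \<Rightarrow> ((complex^'n \<Rightarrow> complex) \<Rightarrow> real)
    \<Rightarrow> ((complex^'n \<Rightarrow> complex) \<Rightarrow> (complex^'n \<Rightarrow> complex))
    \<Rightarrow> ((complex^'n \<Rightarrow> complex) \<Rightarrow> complex) set" where
  "adjoint_kernel B N T = {\<Lambda>. bounded_functional B N \<Lambda> \<and> (\<forall>f\<in>B. \<Lambda> (T f) = 0)}"

lemma fredholm_adjoint_kernel_spanned:
  assumes "fredholm B N T"
  obtains F where "finite F" "F \<subseteq> adjoint_kernel B N T"
    and "\<And>\<Lambda>. \<Lambda> \<in> adjoint_kernel B N T \<Longrightarrow> \<exists>d. \<forall>f\<in>B. \<Lambda> f = (\<Sum>\<mu>\<in>F. d \<mu> * \<mu> f)"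
proof -
  have "\<exists>F. finite F \<and>
        (\<forall>\<mu>\<in>F. bounded_functional B N \<mu> \<and> (\<forall>f\<in>B. \<mu> (T f) = 0)) \<and>
        (\<forall>\<Lambda>. bounded_functional B N \<Lambda> \<and> (\<forall>f\<in>B. \<Lambda> (T f) = 0) \<longrightarrow>
           (\<exists>d. \<forall>f\<in>B. \<Lambda> f = (\<Sum>\<mu>\<in>F. d \<mu> * \<mu> f)))"
    using assms unfolding fredholm_def by (elim conjE)
  then obtain F where "finite F"
    and "\<forall>\<mu>\<in>F. bounded_functional B N \<mu> \<and> (\<forall>f\<in>B. \<mu> (T f) = 0)"
    and "\<forall>\<Lambda>. bounded_functional B N \<Lambda> \<and> (\<forall>f\<in>B. \<Lambda> (T f) = 0) \<longrightarrow>
        (\<exists>d. \<forall>f\<in>B. \<Lambda> f = (\<Sum>\<mu>\<in>F. d \<mu> * \<mu> f))"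
    by (elim exE conjE)
  then show thesis by (intro that[of F]) (auto simp: adjoint_kernel_def)
qed

lemma fredholm_annihilated_combination:
  assumes hbs: "hol_banach_space \<Omega> B N" and "fredholm B N T"
  obtains n :: nat where
    "\<And>S :: 'i set. \<And>q. finite S \<Longrightarrow> n < card S \<Longrightarrow> q ` S \<subseteq> B \<Longrightarrow>
      \<exists>c. (\<exists>k\<in>S. c k \<noteq> 0) \<and>
          (\<forall>\<Lambda>\<in>adjoint_kernel B N T. \<Lambda> (\<lambda>z. \<Sum>k\<in>S. c k * q k z) = 0)"
proof -
  obtain F where "finite F" and F: "F \<subseteq> adjoint_kernel B N T"
    and spanning: "\<And>\<Lambda>. \<Lambda> \<in> adjoint_kernel B N T \<Longrightarrow> \<exists>d. \<forall>f\<in>B. \<Lambda> f = (\<Sum>\<mu>\<in>F. d \<mu> * \<mu> f)"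
    using fredholm_adjoint_kernel_spanned[OF assms(2)] by blast
  show thesis
  proof (rule that[of "card F"])
    fix S q
    assume S: "finite S" "card F < card S" and q: "q ` S \<subseteq> B"
    obtain c where c: "\<exists>k\<in>S. c k \<noteq> 0" "\<forall>\<mu>\<in>F. (\<Sum>k\<in>S. \<mu> (q k) * c k) = 0"
      using homogeneous_system_nontrivial_solution[OF \<open>finite F\<close> S, of "\<lambda>\<mu> k. \<mu> (q k)"] by blast
    define g where "g z = (\<Sum>k\<in>S. c k * q k z)" for z
    have "g \<in> B" unfolding g_def using hol_banach_space_sum[OF hbs S(1) q] .
    have "\<mu> g = 0" if "\<mu> \<in> F" for \<mu>
    proof -
      have "\<mu> g = (\<Sum>k\<in>S. c k * \<mu> (q k))"
        unfolding g_def using F that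
        by (intro bounded_functional_sum[OF hbs _ S(1) q]) (auto simp: adjoint_kernel_def)
      also have "\<dots> = 0" using c(2) that by (simp add: mult.commute)
      finally show ?thesis .
    qed
    then have "\<Lambda> g = 0" if "\<Lambda> \<in> adjoint_kernel B N T" for \<Lambda>
    proof -
      from spanning[OF that] obtain d where "\<forall>f\<in>B. \<Lambda> f = (\<Sum>\<mu>\<in>F. d \<mu> * \<mu> f)" ..
      with \<open>g \<in> B\<close> \<open>\<And>\<mu>. \<mu> \<in> F \<Longrightarrow> \<mu> g = 0\<close> show ?thesis by (auto intro!: sum.neutral)
    qed
    with c(1) show "\<exists>c. (\<exists>k\<in>S. c k \<noteq> 0) \<and>
          (\<forall>\<Lambda>\<in>adjoint_kernel B N T. \<Lambda> (\<lambda>z. \<Sum>k\<in>S. c k * q k z) = 0)"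
      unfolding g_def by blast
  qed
qed

text \<open>The functionals f \<mapsto> \<alpha> x f(x) - \<beta> x f(y x), x \<in> X, are linearly independent, as
  polynomials separating the points show; so infinitely many of them cannot all annihilate
  the range of a Fredholm operator.\<close>
lemma fredholm_no_infinite_annihilating_evaluations:
  fixes \<Omega> :: "(complex^'n) set"
  assumes hbs: "hol_banach_space \<Omega> B N" and cp: "contains_polynomials \<Omega> B"
    and bpe: "bounded_point_evaluations \<Omega> B N" and fr: "fredholm B N T"
    and X: "X \<subseteq> \<Omega>" "infinite X" "y ` X \<subseteq> \<Omega>"
    and \<alpha>: "\<And>x. x \<in> X \<Longrightarrow> \<alpha> x \<noteq> 0"
    and \<beta>: "\<And>x. x \<in> X \<Longrightarrow> \<beta> x \<noteq> 0 \<Longrightarrow> y x \<notin> X"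
    and annihilates: "\<And>x f. x \<in> X \<Longrightarrow> f \<in> B \<Longrightarrow> \<alpha> x * T f x = \<beta> x * T f (y x)"
  shows False
proof -
  obtain n where n: "\<And>S :: (complex^'n) set. \<And>q. finite S \<Longrightarrow> n < card S \<Longrightarrow> q ` S \<subseteq> B \<Longrightarrow>
      \<exists>c. (\<exists>k\<in>S. c k \<noteq> 0) \<and>
          (\<forall>\<Lambda>\<in>adjoint_kernel B N T. \<Lambda> (\<lambda>z. \<Sum>k\<in>S. c k * q k z) = 0)"
    using fredholm_annihilated_combination[OF hbs fr, where 'i = "complex^'n"] by blast
  obtain X0 where X0: "finite X0" "card X0 = Suc n" "X0 \<subseteq> X"
    using infinite_arbitrarily_large[OF X(2)] by blast
  obtain q where q_in: "\<And>x. x \<in> X0 \<Longrightarrow> q x \<in> B" and q_one: "\<And>x. x \<in> X0 \<Longrightarrow> q x x = 1"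
    and q_zero: "\<And>x p. x \<in> X0 \<Longrightarrow> p \<in> X0 \<union> (y ` X0 - X) \<Longrightarrow> p \<noteq> x \<Longrightarrow> q x p = 0"
    using polynomial_lagrange_basis[OF hbs cp X0(1) _ _, of "y ` X0 - X"] X0(1,3) X(1) by blast
  have "q ` X0 \<subseteq> B" using q_in by blast
  from n[OF X0(1) _ this] X0(2) obtain c where c: "\<exists>k\<in>X0. c k \<noteq> 0"
    and annihilated: "\<And>\<Lambda>. \<Lambda> \<in> adjoint_kernel B N T \<Longrightarrow> \<Lambda> (\<lambda>z. \<Sum>k\<in>X0. c k * q k z) = 0"
    by auto
  define g where "g z = (\<Sum>k\<in>X0. c k * q k z)" for z
  have "c x = 0" if x: "x \<in> X0" for x
  proof -
    have "x \<in> \<Omega>" "y x \<in> \<Omega>" using x X0 X by auto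
    then have "bounded_functional B N (\<lambda>f. \<alpha> x * f x - \<beta> x * f (y x))"
      by (rule bounded_functional_two_point_eval[OF bpe])
    with annihilates x X0 have "(\<lambda>f. \<alpha> x * f x - \<beta> x * f (y x)) \<in> adjoint_kernel B N T"
      by (auto simp: adjoint_kernel_def)
    then have "\<alpha> x * g x - \<beta> x * g (y x) = 0"
      unfolding g_def by (rule annihilated)
    moreover have "g x = c x"
    proof -
      have "(\<Sum>k\<in>X0 - {x}. c k * q k x) = 0"
        using q_zero x by (intro sum.neutral) auto
      then show ?thesis using q_one x by (simp add: g_def sum.remove[OF X0(1) x])
    qed
    moreover have "\<beta> x * g (y x) = 0"
    proof (cases "\<beta> x = 0")
      case False
      with \<beta> x X0 have "y x \<in> y ` X0 - X" by auto
      with q_zero X0(3) have "g (y x) = 0" unfolding g_def by (intro sum.neutral) auto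
      then show ?thesis by simp
    qed simp
    ultimately show ?thesis using \<alpha> x X0 by auto
  qed
  with c show False by blast
qed

lemma hol_on_imp_continuous_on: "hol_on \<Omega> f \<Longrightarrow> continuous_on \<Omega> f"
  unfolding hol_on_def
  by (meson continuous_at_imp_continuous_on has_derivative_continuous)

lemma hol_self_map_imp_continuous_on:
  assumes "hol_self_map \<Omega> \<phi>"
  shows "continuous_on \<Omega> \<phi>"
proof -
  have "continuous_on \<Omega> (\<lambda>z. \<chi> i. \<phi> z $ i)"
    using assms unfolding hol_self_map_def
    by (intro continuous_on_vec_lambda hol_on_imp_continuous_on) blast
  then show ?thesis by simp
qed

lemma axis_zero [simp]: "axis i 0 = (0 :: 'a::zero^'n)"
  by (simp add: vec_eq_iff axis_def)

lemma norm_axis: "norm (axis i x :: 'a::real_normed_vector^'n) = norm x"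
proof -
  have "(\<Sum>j\<in>UNIV. norm (axis i x $ j) ^ 2) = (\<Sum>j\<in>UNIV. if j = i then norm x ^ 2 else 0)"
    by (rule sum.cong) (auto simp: axis_def)
  then show ?thesis by (simp add: norm_vec_def L2_set_def)
qed

lemma bounded_linear_axis: "bounded_linear (axis i :: 'a::real_normed_vector \<Rightarrow> 'a^'n)"
proof (rule bounded_linear_intro[where K = 1])
  show "axis i (x + y) = axis i x + (axis i y :: 'a^'n)" for x y
    by (simp add: vec_eq_iff axis_def)
  show "axis i (r *\<^sub>R x) = r *\<^sub>R (axis i x :: 'a^'n)" for r x
    by (simp add: vec_eq_iff axis_def)
qed (simp add: norm_axis)

lemma hol_on_slice_holomorphic:
  fixes f :: "complex^'n \<Rightarrow> complex"
  assumes "hol_on \<Omega> f"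
  shows "(\<lambda>s. f (p + axis i s)) holomorphic_on {s. p + axis i s \<in> \<Omega>}"
  unfolding holomorphic_on_def
proof
  fix s assume "s \<in> {s. p + axis i s \<in> \<Omega>}"
  then obtain L where L: "(f has_derivative L) (at (p + axis i s))" "\<forall>c v. L (c *s v) = c * L v"
    using assms unfolding hol_on_def by auto
  have "((\<lambda>s. p + axis i s) has_derivative axis i) (at s)"
    using has_derivative_add[OF has_derivative_const
        bounded_linear_imp_has_derivative[OF bounded_linear_axis]]
    by simp
  from diff_chain_at[OF this L(1)]
  have "((\<lambda>s. f (p + axis i s)) has_derivative (L \<circ> axis i)) (at s)" by (simp add: o_def)
  moreover have "L \<circ> axis i = (*) (L (axis i 1))"
  proof
    fix h
    have "axis i h = h *s (axis i 1 :: complex^'n)" by (simp add: vec_eq_iff axis_def)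
    then show "(L \<circ> axis i) h = L (axis i 1) * h" using L(2) by (simp add: mult.commute)
  qed
  ultimately have "((\<lambda>s. f (p + axis i s)) has_field_derivative L (axis i 1)) (at s)"
    by (simp add: has_field_derivative_def)
  then show "(\<lambda>s. f (p + axis i s)) field_differentiable at s within {s. p + axis i s \<in> \<Omega>}"
    using field_differentiable_at_within field_differentiable_def by blast
qed

lemma minimum_modulus_cball:
  fixes f :: "complex \<Rightarrow> complex"
  assumes "f holomorphic_on ball a r" "continuous_on (cball a r) f"
    and "\<And>z. z \<in> cball a r \<Longrightarrow> f z \<noteq> 0"
    and "\<And>z. z \<in> sphere a r \<Longrightarrow> m \<le> norm (f z)" "0 < m" "z \<in> cball a r"
  shows "m \<le> norm (f z)"
proof -
  have "norm (inverse (f z)) \<le> inverse m"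
  proof (rule maximum_modulus_frontier[where f = "\<lambda>w. inverse (f w)" and S = "cball a r"])
    show "(\<lambda>z. inverse (f z)) holomorphic_on interior (cball a r)"
      using assms(1,3) by (auto intro!: holomorphic_intros)
    show "continuous_on (closure (cball a r)) (\<lambda>z. inverse (f z))"
      using assms(2,3) by (auto intro!: continuous_intros)
    show "norm (inverse (f w)) \<le> inverse m" if "w \<in> frontier (cball a r)" for w
      unfolding norm_inverse using assms(4) that by (intro le_imp_inverse_le assms(5)) simp
  qed (use assms(6) in auto)
  then have "inverse (norm (f z)) \<le> inverse m" by (simp only: norm_inverse)
  moreover have "0 < norm (f z)" using assms(3,6) by simp
  ultimately show ?thesis by (rule inverse_le_imp_le)
qed

text \<open>If the origin were the only zero, the slices G(., t), t \<noteq> 0, would be zero free on the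
  disc and bounded below on its boundary uniformly in t (by compactness), so by the minimum
  modulus principle G(0, t) would stay away from G(0, 0) = 0 as t \<rightarrow> 0.\<close>
lemma bidisc_zero_not_isolated:
  fixes G :: "complex \<Rightarrow> complex \<Rightarrow> complex"
  assumes "\<rho> > 0"
    and cont: "continuous_on (cball 0 \<rho> \<times> cball 0 \<rho>) (\<lambda>x. G (fst x) (snd x))"
    and hol: "\<And>t. norm t \<le> \<rho> \<Longrightarrow> (\<lambda>s. G s t) holomorphic_on ball 0 \<rho>"
    and "G 0 0 = 0"
  shows "\<exists>s t. norm s \<le> \<rho> \<and> norm t \<le> \<rho> \<and> (s, t) \<noteq> (0, 0) \<and> G s t = 0"
proof (rule ccontr)
  assume "\<not> ?thesis"
  then have G_nonzero: "G s t \<noteq> 0" if "norm s \<le> \<rho>" "norm t \<le> \<rho>" "(s, t) \<noteq> (0, 0)" for s t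
    using that by blast
  define K where "K = sphere (0::complex) \<rho> \<times> cball (0::complex) \<rho>"
  have "compact K" unfolding K_def by (intro compact_Times compact_sphere compact_cball)
  moreover have "K \<noteq> {}" using \<open>\<rho> > 0\<close> by (simp add: K_def)
  moreover have "K \<subseteq> cball 0 \<rho> \<times> cball 0 \<rho>" by (auto simp: K_def)
  ultimately obtain x0 where "x0 \<in> K"
    and x0_min: "\<And>x. x \<in> K \<Longrightarrow> norm (G (fst x0) (snd x0)) \<le> norm (G (fst x) (snd x))"
    using continuous_attains_inf[of K "\<lambda>x. norm (G (fst x) (snd x))"]
      continuous_on_norm[OF continuous_on_subset[OF cont]] by blast
  define m where "m = norm (G (fst x0) (snd x0))"
  have "m > 0"
    using \<open>x0 \<in> K\<close> \<open>\<rho> > 0\<close> G_nonzero[of "fst x0" "snd x0"] by (auto simp: m_def K_def)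
  have lower_bound: "m \<le> norm (G 0 t)" if "norm t \<le> \<rho>" "t \<noteq> 0" for t
  proof (rule minimum_modulus_cball[where f = "\<lambda>s. G s t" and a = 0 and r = \<rho>])
    show "continuous_on (cball 0 \<rho>) (\<lambda>s. G s t)"
      using that(1)
      by (intro continuous_on_compose2[OF cont, of _ "\<lambda>s. (s, t)", simplified]
          continuous_intros) auto
    show "m \<le> norm (G s t)" if "s \<in> sphere 0 \<rho>" for s
      using x0_min[of "(s, t)"] that \<open>norm t \<le> \<rho>\<close> by (simp add: m_def K_def)
    show "G s t \<noteq> 0" if "s \<in> cball 0 \<rho>" for s
      using G_nonzero[of s t] that \<open>norm t \<le> \<rho>\<close> \<open>t \<noteq> 0\<close> by simp
  qed (use hol[OF that(1)] \<open>m > 0\<close> \<open>\<rho> > 0\<close> in simp_all)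
  have "continuous_on (cball 0 \<rho>) (\<lambda>t. G 0 t)"
    using \<open>\<rho> > 0\<close>
    by (intro continuous_on_compose2[OF cont, of _ "\<lambda>t. (0, t)", simplified] continuous_intros) auto
  moreover have "0 \<in> cball (0::complex) \<rho>" using \<open>\<rho> > 0\<close> by simp
  ultimately obtain \<delta> where "\<delta> > 0"
    and \<delta>: "\<forall>t\<in>cball 0 \<rho>. dist t 0 < \<delta> \<longrightarrow> dist (G 0 t) (G 0 0) < m"
    using \<open>m > 0\<close> unfolding continuous_on_iff by blast
  define t where "t = complex_of_real (min \<delta> \<rho> / 2)"
  have "norm t \<le> \<rho>" "t \<noteq> 0" "norm t < \<delta>" using \<open>\<delta> > 0\<close> \<open>\<rho> > 0\<close> by (auto simp: t_def)
  moreover from this \<delta> \<open>G 0 0 = 0\<close> have "norm (G 0 t) < m" by simp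
  ultimately show False using lower_bound[of t] by simp
qed

lemma hol_on_bidisc_slice:
  fixes \<psi> :: "complex^'n \<Rightarrow> complex"
  assumes "hol_on \<Omega> \<psi>"
    and in_\<Omega>: "\<And>s t. norm s \<le> \<rho> \<Longrightarrow> norm t \<le> \<rho> \<Longrightarrow> p + axis i s + axis j t \<in> \<Omega>"
  shows "continuous_on (cball 0 \<rho> \<times> cball 0 \<rho>) (\<lambda>x. \<psi> (p + axis i (fst x) + axis j (snd x)))"
    and "norm t \<le> \<rho> \<Longrightarrow> (\<lambda>s. \<psi> (p + axis i s + axis j t)) holomorphic_on ball 0 \<rho>"
proof -
  have "continuous_on UNIV (\<lambda>x::complex \<times> complex. p + axis i (fst x) + axis j (snd x))"
    by (intro continuous_intros bounded_linear.continuous_on[OF bounded_linear_axis])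
  then show "continuous_on (cball 0 \<rho> \<times> cball 0 \<rho>) (\<lambda>x. \<psi> (p + axis i (fst x) + axis j (snd x)))"
    by (rule continuous_on_compose2[OF hol_on_imp_continuous_on[OF assms(1)] continuous_on_subset])
      (use in_\<Omega> in auto)
next
  assume "norm t \<le> \<rho>"
  have "(\<lambda>s. \<psi> ((p + axis j t) + axis i s)) holomorphic_on {s. (p + axis j t) + axis i s \<in> \<Omega>}"
    by (rule hol_on_slice_holomorphic[OF assms(1)])
  moreover have "ball 0 \<rho> \<subseteq> {s. (p + axis j t) + axis i s \<in> \<Omega>}"
  proof
    fix s :: complex assume "s \<in> ball 0 \<rho>"
    with in_\<Omega> \<open>norm t \<le> \<rho>\<close> have "p + axis i s + axis j t \<in> \<Omega>" by simp
    then show "s \<in> {s. (p + axis j t) + axis i s \<in> \<Omega>}" by (simp add: add_ac)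
  qed
  ultimately show "(\<lambda>s. \<psi> (p + axis i s + axis j t)) holomorphic_on ball 0 \<rho>"
    by (simp add: add_ac holomorphic_on_subset)
qed

lemma hol_on_zero_islimpt:
  fixes \<psi> :: "complex^'n \<Rightarrow> complex"
  assumes "CARD('n) > 1" "open \<Omega>" "hol_on \<Omega> \<psi>" "z0 \<in> \<Omega>" "\<psi> z0 = 0"
  shows "z0 islimpt {z\<in>\<Omega>. \<psi> z = 0}"
  unfolding islimpt_approachable
proof (intro allI impI)
  fix \<epsilon> :: real assume "\<epsilon> > 0"
  obtain i j :: 'n where "i \<noteq> j"
    using assms(1) card_le_Suc0_iff_eq[of "UNIV :: 'n set"] by force
  obtain e where "e > 0" "ball z0 e \<subseteq> \<Omega>" using assms(2,4) open_contains_ball by blast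
  define \<rho> where "\<rho> = min e \<epsilon> / 3"
  have "\<rho> > 0" using \<open>e > 0\<close> \<open>\<epsilon> > 0\<close> by (simp add: \<rho>_def)
  define E where "E s t = z0 + axis i s + axis j t" for s t
  have E_near: "E s t \<in> \<Omega> \<and> dist (E s t) z0 < \<epsilon>" if "norm s \<le> \<rho>" "norm t \<le> \<rho>" for s t
  proof -
    have "dist (E s t) z0 \<le> norm s + norm t"
      using norm_triangle_ineq[of "axis i s" "axis j t :: complex^'n"]
      by (simp add: E_def dist_norm norm_axis add.assoc)
    also have "\<dots> < min e \<epsilon>" using that \<open>\<rho> > 0\<close> by (simp add: \<rho>_def)
    finally show ?thesis using \<open>ball z0 e \<subseteq> \<Omega>\<close> by (auto simp: dist_commute)
  qed
  then have "z0 + axis i s + axis j t \<in> \<Omega>" if "norm s \<le> \<rho>" "norm t \<le> \<rho>" for s t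
    using that by (simp add: E_def)
  note slice = hol_on_bidisc_slice[OF assms(3) this]
  have "\<exists>s t. norm s \<le> \<rho> \<and> norm t \<le> \<rho> \<and> (s, t) \<noteq> (0, 0) \<and> \<psi> (E s t) = 0"
    unfolding E_def
    by (rule bidisc_zero_not_isolated[where G = "\<lambda>s t. \<psi> (z0 + axis i s + axis j t)",
          OF \<open>\<rho> > 0\<close> slice]) (simp_all add: assms(5))
  then obtain s t where "norm s \<le> \<rho>" "norm t \<le> \<rho>" "(s, t) \<noteq> (0, 0)" "\<psi> (E s t) = 0"
    by blast
  moreover from this(3) \<open>i \<noteq> j\<close> have "E s t \<noteq> z0"
    by (auto simp: E_def vec_eq_iff axis_def)
  ultimately show "\<exists>z\<in>{z\<in>\<Omega>. \<psi> z = 0}. z \<noteq> z0 \<and> dist z z0 < \<epsilon>"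
    using E_near by blast
qed

lemma inj_on_ball_avoiding_coincidences:
  assumes "ball c r \<subseteq> \<Omega>"
    and "\<And>x. x \<in> {x\<in>\<Omega>. \<exists>y\<in>\<Omega>. y \<noteq> x \<and> \<phi> y = \<phi> x} \<Longrightarrow> x \<noteq> c \<Longrightarrow> r \<le> dist c x"
  shows "inj_on \<phi> (ball c r)"
proof (rule inj_onI, rule ccontr)
  fix x x' assume x: "x \<in> ball c r" "x' \<in> ball c r" "\<phi> x = \<phi> x'" "x \<noteq> x'"
  with assms(1) have "x \<in> {x\<in>\<Omega>. \<exists>y\<in>\<Omega>. y \<noteq> x \<and> \<phi> y = \<phi> x}"
    and "x' \<in> {x\<in>\<Omega>. \<exists>y\<in>\<Omega>. y \<noteq> x \<and> \<phi> y = \<phi> x}"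
    by auto
  moreover have "x \<noteq> c \<or> x' \<noteq> c" using x(4) by blast
  ultimately show False using assms(2) x(1,2) by (auto simp: not_le[symmetric])
qed

lemma inj_on_if_finite_coincidences:
  fixes \<phi> :: "'a::euclidean_space \<Rightarrow> 'a"
  assumes "open \<Omega>" "continuous_on \<Omega> \<phi>"
    and finite_P: "finite {x\<in>\<Omega>. \<exists>y\<in>\<Omega>. y \<noteq> x \<and> \<phi> y = \<phi> x}"
  shows "inj_on \<phi> \<Omega>"
proof (rule inj_onI, rule ccontr)
  define P where "P = {x\<in>\<Omega>. \<exists>y\<in>\<Omega>. y \<noteq> x \<and> \<phi> y = \<phi> x}"
  fix a b assume ab: "a \<in> \<Omega>" "b \<in> \<Omega>" "\<phi> a = \<phi> b" "a \<noteq> b"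
  obtain da db where "da > 0" "db > 0"
    and "\<forall>x\<in>P. x \<noteq> a \<longrightarrow> da \<le> dist a x" "\<forall>x\<in>P. x \<noteq> b \<longrightarrow> db \<le> dist b x"
    using finite_set_avoid[OF finite_P[folded P_def]] by metis
  obtain ea eb where "ea > 0" "eb > 0" "ball a ea \<subseteq> \<Omega>" "ball b eb \<subseteq> \<Omega>"
    using ab(1,2) assms(1) open_contains_ball by metis
  define r where "r = min (min da db) (min (min ea eb) (dist a b / 2))"
  have "r > 0" using \<open>da > 0\<close> \<open>db > 0\<close> \<open>ea > 0\<close> \<open>eb > 0\<close> ab(4) by (simp add: r_def)
  have Ua: "ball a r \<subseteq> \<Omega>" "\<And>x. x \<in> P \<Longrightarrow> x \<noteq> a \<Longrightarrow> r \<le> dist a x"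
    using \<open>ball a ea \<subseteq> \<Omega>\<close> \<open>\<forall>x\<in>P. x \<noteq> a \<longrightarrow> da \<le> dist a x\<close> by (force simp: r_def)+
  have Ub: "ball b r \<subseteq> \<Omega>" "\<And>x. x \<in> P \<Longrightarrow> x \<noteq> b \<Longrightarrow> r \<le> dist b x"
    using \<open>ball b eb \<subseteq> \<Omega>\<close> \<open>\<forall>x\<in>P. x \<noteq> b \<longrightarrow> db \<le> dist b x\<close> by (force simp: r_def)+
  have disjoint: "x \<notin> ball b r" if "x \<in> ball a r" for x
  proof -
    have "dist a b \<le> dist a x + dist b x" using dist_triangle[of a b x] by (simp add: dist_commute)
    moreover have "r \<le> dist a b / 2" by (simp add: r_def)
    ultimately show ?thesis using that by simp
  qed
  note local_inj = inj_on_ball_avoiding_coincidences[of _ r \<Omega> \<phi>, folded P_def]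
  define W where "W = \<phi> ` ball a r \<inter> \<phi> ` ball b r"
  have "open W" unfolding W_def
    using invariance_of_domain[OF continuous_on_subset[OF assms(2) Ua(1)] open_ball
        local_inj[OF Ua]]
      invariance_of_domain[OF continuous_on_subset[OF assms(2) Ub(1)] open_ball
        local_inj[OF Ub]]
    by blast
  moreover have "\<phi> a \<in> W"
  proof -
    have "a \<in> ball a r" "b \<in> ball b r" using \<open>r > 0\<close> by simp_all
    then show ?thesis using ab(3) unfolding W_def by (metis IntI imageI)
  qed
  moreover have "W \<subseteq> \<phi> ` P"
  proof
    fix w assume "w \<in> W"
    then obtain x y where "x \<in> ball a r" "y \<in> ball b r" "\<phi> x = w" "\<phi> y = w"
      by (auto simp: W_def)
    moreover from this disjoint have "x \<noteq> y" by blast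
    ultimately have "x \<in> P" using Ua(1) Ub(1) unfolding P_def by auto
    with \<open>\<phi> x = w\<close> show "w \<in> \<phi> ` P" by blast
  qed
  then have "finite W" using finite_P[folded P_def] finite_subset by blast
  ultimately show False using finite_imp_not_open by blast
qed

lemma mult_comp_op_apply: "x \<in> \<Omega> \<Longrightarrow> mult_op \<Omega> \<psi> (comp_op \<Omega> \<phi> f) x = \<psi> x * f (\<phi> x)"
  by (simp add: mult_op_def comp_op_def)

context
  fixes \<Omega> :: "(complex^'n) set" and B N \<psi> \<phi>
  assumes hbs: "hol_banach_space \<Omega> B N" and cp: "contains_polynomials \<Omega> B"
    and bpe: "bounded_point_evaluations \<Omega> B N"
    and fr: "fredholm B N (\<lambda>f. mult_op \<Omega> \<psi> (comp_op \<Omega> \<phi> f))"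
begin

lemma fredholm_mult_comp_finite_zeros: "finite {z\<in>\<Omega>. \<psi> z = 0}"
proof (rule ccontr)
  assume "infinite {z\<in>\<Omega>. \<psi> z = 0}"
  then show False
    by (rule fredholm_no_infinite_annihilating_evaluations[OF hbs cp bpe fr,
          where y = "\<lambda>x. x" and \<alpha> = "\<lambda>_. 1" and \<beta> = "\<lambda>_. 0", rotated])
      (auto simp: mult_comp_op_apply)
qed

lemma fredholm_mult_comp_finite_fibres: "finite {x\<in>\<Omega>. \<phi> x = w}"
proof (rule ccontr)
  assume fibre: "infinite {x\<in>\<Omega>. \<phi> x = w}"
  from Diff_infinite_finite[OF fredholm_mult_comp_finite_zeros this]
  obtain y0 where y0: "y0 \<in> \<Omega>" "\<phi> y0 = w" "\<psi> y0 \<noteq> 0"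
    using infinite_imp_nonempty by blast
  have "infinite ({x\<in>\<Omega>. \<phi> x = w} - {y0})" using fibre by simp
  then show False
    by (rule fredholm_no_infinite_annihilating_evaluations[OF hbs cp bpe fr,
          where y = "\<lambda>_. y0" and \<alpha> = "\<lambda>_. \<psi> y0" and \<beta> = \<psi>, rotated])
      (use y0 in \<open>auto simp: mult_comp_op_apply\<close>)
qed

lemma fredholm_mult_comp_finite_multiple_values:
  "finite {w. \<exists>x\<in>\<Omega>. \<exists>y\<in>\<Omega>. x \<noteq> y \<and> \<phi> x = w \<and> \<phi> y = w}"
proof (rule ccontr)
  define Z where "Z = {z\<in>\<Omega>. \<psi> z = 0}"
  define V where "V = {w. \<exists>x\<in>\<Omega>. \<exists>y\<in>\<Omega>. x \<noteq> y \<and> \<phi> x = w \<and> \<phi> y = w} - \<phi> ` Z"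
  assume "infinite {w. \<exists>x\<in>\<Omega>. \<exists>y\<in>\<Omega>. x \<noteq> y \<and> \<phi> x = w \<and> \<phi> y = w}"
  then have "infinite V"
    using fredholm_mult_comp_finite_zeros by (simp add: V_def Z_def Diff_infinite_finite)
  have "\<forall>w\<in>V. \<exists>x y. x \<in> \<Omega> \<and> y \<in> \<Omega> \<and> x \<noteq> y \<and> \<phi> x = w \<and> \<phi> y = w \<and> \<psi> x \<noteq> 0 \<and> \<psi> y \<noteq> 0"
  proof
    fix w assume "w \<in> V"
    then obtain x y where "x \<in> \<Omega>" "y \<in> \<Omega>" "x \<noteq> y" "\<phi> x = w" "\<phi> y = w" "w \<notin> \<phi> ` Z"
      by (auto simp: V_def)
    moreover from calculation have "\<psi> x \<noteq> 0" "\<psi> y \<noteq> 0" by (auto simp: Z_def image_iff)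
    ultimately show "\<exists>x y. x \<in> \<Omega> \<and> y \<in> \<Omega> \<and> x \<noteq> y \<and> \<phi> x = w \<and> \<phi> y = w \<and> \<psi> x \<noteq> 0 \<and> \<psi> y \<noteq> 0"
      by blast
  qed
  then obtain x y where xy: "\<And>w. w \<in> V \<Longrightarrow> x w \<in> \<Omega> \<and> y w \<in> \<Omega> \<and> x w \<noteq> y w \<and>
      \<phi> (x w) = w \<and> \<phi> (y w) = w \<and> \<psi> (x w) \<noteq> 0 \<and> \<psi> (y w) \<noteq> 0"
    by metis
  have partner_outside: "y w \<noteq> x w'" if "w \<in> V" "w' \<in> V" for w w'
    using xy[OF that(1)] xy[OF that(2)] by metis
  have "inj_on x V" by (rule inj_on_inverseI[where g = \<phi>]) (use xy in blast)
  with \<open>infinite V\<close> have "infinite (x ` V)" using finite_imageD by blast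
  then show False
    by (rule fredholm_no_infinite_annihilating_evaluations[OF hbs cp bpe fr,
          where y = "\<lambda>z. y (\<phi> z)" and \<alpha> = "\<lambda>z. \<psi> (y (\<phi> z))" and \<beta> = \<psi>, rotated])
      (use xy partner_outside in \<open>auto simp: mult_comp_op_apply\<close>)
qed

lemma fredholm_mult_comp_finite_coincidences:
  "finite {x\<in>\<Omega>. \<exists>y\<in>\<Omega>. y \<noteq> x \<and> \<phi> y = \<phi> x}"
proof (rule finite_subset)
  show "{x\<in>\<Omega>. \<exists>y\<in>\<Omega>. y \<noteq> x \<and> \<phi> y = \<phi> x}
      \<subseteq> (\<Union>w\<in>{w. \<exists>x\<in>\<Omega>. \<exists>y\<in>\<Omega>. x \<noteq> y \<and> \<phi> x = w \<and> \<phi> y = w}. {x\<in>\<Omega>. \<phi> x = w})"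
    by blast
  show "finite \<dots>"
    using fredholm_mult_comp_finite_multiple_values fredholm_mult_comp_finite_fibres by blast
qed

end

theorem lemma5p2:
  fixes \<Omega> :: "(complex^'n) set"
    and B :: "(complex^'n \<Rightarrow> complex) set"
    and N :: "(complex^'n \<Rightarrow> complex) \<Rightarrow> real"
    and \<psi> :: "complex^'n \<Rightarrow> complex"
    and \<phi> :: "complex^'n \<Rightarrow> complex^'n"
  assumes "open \<Omega>" and "connected \<Omega>" and "bounded \<Omega>"
    and "hol_banach_space \<Omega> B N"
    and "contains_polynomials \<Omega> B"
    and "bounded_point_evaluations \<Omega> B N"
    and "\<psi> \<in> B"
    and "hol_self_map \<Omega> \<phi>"
    and "bounded_op B N (mult_op \<Omega> \<psi>)"
    and "bounded_op B N (comp_op \<Omega> \<phi>)"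
    and "fredholm B N (\<lambda>f. mult_op \<Omega> \<psi> (comp_op \<Omega> \<phi> f))"
  shows "(CARD('n) = 1 \<longrightarrow> finite {z\<in>\<Omega>. \<psi> z = 0}) \<and>
         (CARD('n) > 1 \<longrightarrow> (\<forall>z\<in>\<Omega>. \<psi> z \<noteq> 0)) \<and>
         inj_on \<phi> \<Omega>"
proof -
  have zeros: "finite {z\<in>\<Omega>. \<psi> z = 0}"
    by (rule fredholm_mult_comp_finite_zeros[OF assms(4-6,11)])
  have "\<psi> z \<noteq> 0" if "CARD('n) > 1" "z \<in> \<Omega>" for z
    using hol_on_zero_islimpt[OF that(1) assms(1) hol_banach_spaceD(4)[OF assms(4,7)] that(2)]
      islimpt_finite[OF zeros] by blast
  moreover have "inj_on \<phi> \<Omega>"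
    using assms(1) hol_self_map_imp_continuous_on[OF assms(8)]
      fredholm_mult_comp_finite_coincidences[OF assms(4-6,11)]
    by (rule inj_on_if_finite_coincidences)
  ultimately show ?thesis using zeros by blast
qed

end
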